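(* Let $\dot G\in\mathcal C_1\cup\mathcal C_4\cup\mathcal C_5$ be a connected, non-complete, $5$-regular and $1$ net-regular SRSG with parameters $(n,5,a,b,c)$. Then: (1) $a<3$; (2) if $a=0$, then two vertices joined by a positive edge have no common neighbours; if $b=0$, then two vertices joined by a negative edge have no common neighbours; (3) if $a=-1$, then $b\le 0$; (4) if $a=-2$, then $b\ge -1$; (5) $a>-3$; (6) $-2\le b<3$; (7) if $\dot G$ contains a balanced triangle (product of edge signs $+1$) with two negative edges, then $b\le 0$; (8) if $b=2$ or $b=-1$, then $a\le 0$; (9) if $b=-2$, then $a\ge 1$.
   Context: A signed graph $\dot G=(G,\sigma)$ is a simple graph $G$ with $\sigma:E(G)\to\{\pm1\}$; adjacency matrix $A_{\dot G}$ has entries $\sigma(v_iv_j)$ for adjacent vertices and $0$ otherwise. Degree and connectedness refer to $G$; net-degree is $d^+(v)-d^-(v)$; $\rho$ net-regular means all net-degrees equal $\rho$. $\dot G$ on $n$ vertices is an SRSG if it is neither homogeneous (all edges of one sign) complete nor edgeless and there are $r\in\mathbb N$, $a,b,c\in\mathbb Z$ with $(A^2_{\dot G})_{ii}=r$, $(A^2_{\dot G})_{ij}=a$ for positive edges $v_iv_j$, $b$ for negative edges, $c$ for distinct non-adjacent pairs; parameters $(n,r,a,b,c)$. Classes of inhomogeneous SRSGs: $\mathcal C_1$: $a=-b$ and (complete, or non-complete with $c\ne0$); $\mathcal C_4$: $a\ne-b$, non-complete, $c=0$; $\mathcal C_5$: $a\ne-b$, non-complete, $c\neq0$, $c\neq\frac{a+b}2$.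 *)

theory Defs
  imports Complex_Main
begin

text \<open>A signed graph on a finite vertex set V is given by a sign function
  sg :: 'a => 'a => int: sg u v = 1 for a positive edge, -1 for a negative
  edge, 0 for non-adjacent vertices (or u = v).  The adjacency matrix is
  (sg u v) for u, v in V.\<close>

definition signed_graph :: "'a set \<Rightarrow> ('a \<Rightarrow> 'a \<Rightarrow> int) \<Rightarrow> bool" where
  "signed_graph V sg \<longleftrightarrow> finite V \<and>
     (\<forall>u\<in>V. \<forall>v\<in>V. sg u v \<in> {-1, 0, 1} \<and> sg u v = sg v u) \<and>
     (\<forall>v\<in>V. sg v v = 0)"

definition adj :: "('a \<Rightarrow> 'a \<Rightarrow> int) \<Rightarrow> 'a \<Rightarrow> 'a \<Rightarrow> bool" where
  "adj sg u v \<longleftrightarrow> sg u v \<noteq> 0"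

definition A2 :: "'a set \<Rightarrow> ('a \<Rightarrow> 'a \<Rightarrow> int) \<Rightarrow> 'a \<Rightarrow> 'a \<Rightarrow> int" where
  "A2 V sg u v = (\<Sum>w\<in>V. sg u w * sg w v)"

definition degree :: "'a set \<Rightarrow> ('a \<Rightarrow> 'a \<Rightarrow> int) \<Rightarrow> 'a \<Rightarrow> nat" where
  "degree V sg v = card {u\<in>V. adj sg v u}"

definition pos_degree :: "'a set \<Rightarrow> ('a \<Rightarrow> 'a \<Rightarrow> int) \<Rightarrow> 'a \<Rightarrow> nat" where
  "pos_degree V sg v = card {u\<in>V. sg v u = 1}"

definition neg_degree :: "'a set \<Rightarrow> ('a \<Rightarrow> 'a \<Rightarrow> int) \<Rightarrow> 'a \<Rightarrow> nat" where
  "neg_degree V sg v = card {u\<in>V. sg v u = -1}"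

definition net_degree :: "'a set \<Rightarrow> ('a \<Rightarrow> 'a \<Rightarrow> int) \<Rightarrow> 'a \<Rightarrow> int" where
  "net_degree V sg v = int (pos_degree V sg v) - int (neg_degree V sg v)"

definition regular :: "'a set \<Rightarrow> ('a \<Rightarrow> 'a \<Rightarrow> int) \<Rightarrow> nat \<Rightarrow> bool" where
  "regular V sg r \<longleftrightarrow> (\<forall>v\<in>V. degree V sg v = r)"

definition net_regular :: "'a set \<Rightarrow> ('a \<Rightarrow> 'a \<Rightarrow> int) \<Rightarrow> int \<Rightarrow> bool" where
  "net_regular V sg \<rho> \<longleftrightarrow> (\<forall>v\<in>V. net_degree V sg v = \<rho>)"

definition complete :: "'a set \<Rightarrow> ('a \<Rightarrow> 'a \<Rightarrow> int) \<Rightarrow> bool" where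
  "complete V sg \<longleftrightarrow> (\<forall>u\<in>V. \<forall>v\<in>V. u \<noteq> v \<longrightarrow> adj sg u v)"

definition edgeless :: "'a set \<Rightarrow> ('a \<Rightarrow> 'a \<Rightarrow> int) \<Rightarrow> bool" where
  "edgeless V sg \<longleftrightarrow> (\<forall>u\<in>V. \<forall>v\<in>V. \<not> adj sg u v)"

definition homogeneous :: "'a set \<Rightarrow> ('a \<Rightarrow> 'a \<Rightarrow> int) \<Rightarrow> bool" where
  "homogeneous V sg \<longleftrightarrow> (\<forall>u\<in>V. \<forall>v\<in>V. sg u v \<noteq> -1) \<or> (\<forall>u\<in>V. \<forall>v\<in>V. sg u v \<noteq> 1)"

definition connected_sg :: "'a set \<Rightarrow> ('a \<Rightarrow> 'a \<Rightarrow> int) \<Rightarrow> bool" where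
  "connected_sg V sg \<longleftrightarrow> V \<noteq> {} \<and>
     (\<forall>u\<in>V. \<forall>v\<in>V. (\<lambda>x y. x \<in> V \<and> y \<in> V \<and> adj sg x y)\<^sup>*\<^sup>* u v)"

definition SRSG :: "'a set \<Rightarrow> ('a \<Rightarrow> 'a \<Rightarrow> int) \<Rightarrow> nat \<Rightarrow> nat \<Rightarrow> int \<Rightarrow> int \<Rightarrow> int \<Rightarrow> bool" where
  "SRSG V sg n r a b c \<longleftrightarrow> signed_graph V sg \<and> n = card V \<and>
     \<not> (homogeneous V sg \<and> complete V sg) \<and> \<not> edgeless V sg \<and>
     (\<forall>v\<in>V. A2 V sg v v = int r) \<and>
     (\<forall>u\<in>V. \<forall>v\<in>V. sg u v = 1 \<longrightarrow> A2 V sg u v = a) \<and>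
     (\<forall>u\<in>V. \<forall>v\<in>V. sg u v = -1 \<longrightarrow> A2 V sg u v = b) \<and>
     (\<forall>u\<in>V. \<forall>v\<in>V. u \<noteq> v \<and> \<not> adj sg u v \<longrightarrow> A2 V sg u v = c)"

definition class_C1 :: "'a set \<Rightarrow> ('a \<Rightarrow> 'a \<Rightarrow> int) \<Rightarrow> int \<Rightarrow> int \<Rightarrow> int \<Rightarrow> bool" where
  "class_C1 V sg a b c \<longleftrightarrow> \<not> homogeneous V sg \<and> a = - b \<and>
     (complete V sg \<or> (\<not> complete V sg \<and> c \<noteq> 0))"

definition class_C4 :: "'a set \<Rightarrow> ('a \<Rightarrow> 'a \<Rightarrow> int) \<Rightarrow> int \<Rightarrow> int \<Rightarrow> int \<Rightarrow> bool" where
  "class_C4 V sg a b c \<longleftrightarrow> \<not> homogeneous V sg \<and> a \<noteq> - b \<and> \<not> complete V sg \<and> c = 0"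

definition class_C5 :: "'a set \<Rightarrow> ('a \<Rightarrow> 'a \<Rightarrow> int) \<Rightarrow> int \<Rightarrow> int \<Rightarrow> int \<Rightarrow> bool" where
  "class_C5 V sg a b c \<longleftrightarrow> \<not> homogeneous V sg \<and> a \<noteq> - b \<and> \<not> complete V sg \<and> c \<noteq> 0 \<and>
     real_of_int c \<noteq> real_of_int (a + b) / 2"

end

(*
  Every vertex has 3 positive and 2 negative neighbours.  The SRSG conditions say
  2 A^2 = 2(5 - c) I + (a - b) A + (a + b - 2c) |A| + 2c J, and A J = J A = J, so comparing
  A A^2 with A^2 A and using a + b <> 2c (which all three classes guarantee) shows that A
  commutes with |A|: for all u, v there are as many common neighbours w with signs
  (uw, vw) = (+,-) as with (-,+).  Along an edge uv this gives A^2_uv = p + m - 2x, where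
  p, m, x count the common neighbours of sign pattern (+,+), (-,-), (+,-); these counts are
  bounded by the remaining positive and negative neighbours of u.  Since the signed
  triangles through a vertex come in pairs, 3a - 2b is even, so a is even.  If a = 4, a = -4,
  or a = 0 with a common neighbour, adjacent vertices have 4 common neighbours, i.e. equal
  closed neighbourhoods; this spreads through N[u], which by connectivity makes the graph K6,
  contradicting non-completeness.  The claims about b follow by looking at a negative edge
  uv together with the positive edge uw to a common neighbour w, and b >= 3 is excluded by
  counting the positive edges between the positive and the negative neighbours of a vertex
  in two ways.
*)
theory Submission
  imports Defs
begin

definition nbrs :: "'a set \<Rightarrow> ('a \<Rightarrow> 'a \<Rightarrow> int) \<Rightarrow> 'a \<Rightarrow> 'a set" where
  "nbrs V sg u = {w\<in>V. adj sg u w}"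

definition signed_nbrs :: "'a set \<Rightarrow> ('a \<Rightarrow> 'a \<Rightarrow> int) \<Rightarrow> int \<Rightarrow> 'a \<Rightarrow> 'a set" where
  "signed_nbrs V sg s u = {w\<in>V. sg u w = s}"

definition common_nbrs :: "'a set \<Rightarrow> ('a \<Rightarrow> 'a \<Rightarrow> int) \<Rightarrow> 'a \<Rightarrow> 'a \<Rightarrow> 'a set" where
  "common_nbrs V sg u v = {w\<in>V. adj sg u w \<and> adj sg v w}"

definition common_signed_nbrs ::
    "'a set \<Rightarrow> ('a \<Rightarrow> 'a \<Rightarrow> int) \<Rightarrow> int \<Rightarrow> int \<Rightarrow> 'a \<Rightarrow> 'a \<Rightarrow> 'a set" where
  "common_signed_nbrs V sg s t u v = {w\<in>V. sg u w = s \<and> sg v w = t}"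

lemma even_sum_symmetric_zero_diag:
  fixes f :: "'b \<Rightarrow> 'b \<Rightarrow> int"
  assumes "finite A" "\<And>v w. v \<in> A \<Longrightarrow> w \<in> A \<Longrightarrow> f v w = f w v" "\<And>v. v \<in> A \<Longrightarrow> f v v = 0"
  shows "even (\<Sum>v\<in>A. \<Sum>w\<in>A. f v w)"
  using assms
proof (induction A rule: finite_induct)
  case empty
  then show ?case by simp
next
  case (insert x F)
  have "(\<Sum>v\<in>F. f v x) = (\<Sum>w\<in>F. f x w)"
    using insert.prems(1) by (intro sum.cong) auto
  then have "(\<Sum>v\<in>insert x F. \<Sum>w\<in>insert x F. f v w)
      = 2 * (\<Sum>w\<in>F. f x w) + (\<Sum>v\<in>F. \<Sum>w\<in>F. f v w)"
    using insert.hyps insert.prems(2) by (simp add: sum.distrib)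
  moreover have "even (\<Sum>v\<in>F. \<Sum>w\<in>F. f v w)"
    using insert.IH insert.prems by blast
  ultimately show ?case by simp
qed

lemma sum_sg_mult_A2_assoc:
  "(\<Sum>w\<in>V. sg u w * A2 V sg w v) = (\<Sum>w\<in>V. A2 V sg u w * sg w v)"
  unfolding A2_def sum_distrib_left sum_distrib_right
  by (subst sum.swap) (simp add: mult.assoc)

lemma V_eq_closed_nbrs_if_closed:
  assumes "connected_sg V sg" "u \<in> V"
    and "\<And>x. x \<in> insert u (nbrs V sg u) \<Longrightarrow> nbrs V sg x \<subseteq> insert u (nbrs V sg u)"
  shows "V = insert u (nbrs V sg u)"
proof -
  have "v \<in> insert u (nbrs V sg u)" if "(\<lambda>x y. x \<in> V \<and> y \<in> V \<and> adj sg x y)\<^sup>*\<^sup>* u v" for v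
    using that
  proof (induction rule: rtranclp_induct)
    case (step y z)
    then show ?case using assms(3) by (auto simp: nbrs_def)
  qed simp
  then show ?thesis
    using assms(1,2) unfolding connected_sg_def by (auto simp: nbrs_def)
qed

context
  fixes V :: "'a set" and sg :: "'a \<Rightarrow> 'a \<Rightarrow> int"
  assumes signed: "signed_graph V sg"
begin

lemma finite_vertices: "finite V"
  using signed unfolding signed_graph_def by blast

lemma sg_cases: "u \<in> V \<Longrightarrow> v \<in> V \<Longrightarrow> sg u v = -1 \<or> sg u v = 0 \<or> sg u v = 1"
  using signed unfolding signed_graph_def by blast

lemma sg_sym: "u \<in> V \<Longrightarrow> v \<in> V \<Longrightarrow> sg u v = sg v u"
  using signed unfolding signed_graph_def by blast

lemma sg_self: "v \<in> V \<Longrightarrow> sg v v = 0"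
  using signed unfolding signed_graph_def by blast

lemma finite_common_nbrs [simp]: "finite (common_nbrs V sg u v)"
  using finite_vertices by (simp add: common_nbrs_def)

lemma finite_common_signed_nbrs [simp]: "finite (common_signed_nbrs V sg s t u v)"
  using finite_vertices by (simp add: common_signed_nbrs_def)

lemma nbrs_eq_signed_nbrs_Un:
  "u \<in> V \<Longrightarrow> nbrs V sg u = signed_nbrs V sg 1 u \<union> signed_nbrs V sg (-1) u"
  using sg_cases by (auto simp: nbrs_def signed_nbrs_def adj_def)

lemma degree_eq_pos_degree_plus_neg_degree:
  assumes "u \<in> V"
  shows "degree V sg u = pos_degree V sg u + neg_degree V sg u"
proof -
  have "degree V sg u = card (signed_nbrs V sg 1 u \<union> signed_nbrs V sg (-1) u)"
    using nbrs_eq_signed_nbrs_Un[OF assms] by (simp add: degree_def nbrs_def)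
  also have "\<dots> = card (signed_nbrs V sg 1 u) + card (signed_nbrs V sg (-1) u)"
    using finite_vertices by (intro card_Un_disjoint) (auto simp: signed_nbrs_def)
  finally show ?thesis
    by (simp add: pos_degree_def neg_degree_def signed_nbrs_def)
qed

lemma pos_neg_degree_if_regular_net_regular:
  assumes "regular V sg r" "net_regular V sg \<rho>" "u \<in> V"
  shows "2 * int (pos_degree V sg u) = int r + \<rho>" and "2 * int (neg_degree V sg u) = int r - \<rho>"
proof -
  have "degree V sg u = r" "net_degree V sg u = \<rho>"
    using assms by (simp_all add: regular_def net_regular_def)
  then show "2 * int (pos_degree V sg u) = int r + \<rho>" and "2 * int (neg_degree V sg u) = int r - \<rho>"
    using degree_eq_pos_degree_plus_neg_degree[OF assms(3)] by (simp_all add: net_degree_def)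
qed

lemma sum_sign_products:
  fixes f g :: "int \<Rightarrow> int"
  assumes "f 0 = 0" "g 0 = 0" "u \<in> V" "v \<in> V"
  shows "(\<Sum>w\<in>V. f (sg u w) * g (sg v w))
    = (\<Sum>s\<in>{1,-1}. \<Sum>t\<in>{1,-1}. f s * g t * int (card (common_signed_nbrs V sg s t u v)))"
proof -
  let ?ind = "\<lambda>s t w. of_bool (sg u w = s \<and> sg v w = t) :: int"
  have "f (sg u w) * g (sg v w) = (\<Sum>s\<in>{1,-1}. \<Sum>t\<in>{1,-1}. f s * g t * ?ind s t w)"
    if "w \<in> V" for w
    using sg_cases[OF \<open>u \<in> V\<close> that] sg_cases[OF \<open>v \<in> V\<close> that] assms(1,2) by auto
  then have "(\<Sum>w\<in>V. f (sg u w) * g (sg v w))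
      = (\<Sum>w\<in>V. \<Sum>s\<in>{1,-1}. \<Sum>t\<in>{1,-1}. f s * g t * ?ind s t w)"
    by (intro sum.cong refl)
  also have "\<dots> = (\<Sum>s\<in>{1,-1}. \<Sum>t\<in>{1,-1}. f s * g t * (\<Sum>w\<in>V. ?ind s t w))"
    by (subst sum.swap) (simp only: sum.swap[where A = V] sum_distrib_left)
  also have "\<dots> = (\<Sum>s\<in>{1,-1}. \<Sum>t\<in>{1,-1}. f s * g t * int (card (common_signed_nbrs V sg s t u v)))"
    using finite_vertices by (simp only: sum_of_bool_eq) (simp add: common_signed_nbrs_def Int_def)
  finally show ?thesis .
qed

lemma sum_sg_eq_net_degree:
  assumes "u \<in> V"
  shows "(\<Sum>w\<in>V. sg u w) = net_degree V sg u"
proof -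
  have "(\<Sum>w\<in>V. sg u w) = (\<Sum>w\<in>V. of_bool (sg u w = 1) - of_bool (sg u w = -1))"
    using sg_cases[OF assms] by (intro sum.cong) auto
  then show ?thesis
    using finite_vertices
    by (simp add: sum_subtractf net_degree_def pos_degree_def neg_degree_def Int_def)
qed

lemma A2_eq_card_common_signed_nbrs:
  assumes "u \<in> V" "v \<in> V"
  shows "A2 V sg u v = int (card (common_signed_nbrs V sg 1 1 u v))
    + int (card (common_signed_nbrs V sg (-1) (-1) u v))
    - int (card (common_signed_nbrs V sg 1 (-1) u v))
    - int (card (common_signed_nbrs V sg (-1) 1 u v))"
proof -
  have "A2 V sg u v = (\<Sum>w\<in>V. id (sg u w) * id (sg v w))"
    unfolding A2_def using sg_sym[OF assms(2)] by (intro sum.cong) auto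
  then show ?thesis
    using sum_sign_products[of id id u v] assms by simp
qed

lemma card_common_nbrs_eq:
  assumes "u \<in> V" "v \<in> V"
  shows "card (common_nbrs V sg u v) = card (common_signed_nbrs V sg 1 1 u v)
    + card (common_signed_nbrs V sg (-1) (-1) u v)
    + card (common_signed_nbrs V sg 1 (-1) u v)
    + card (common_signed_nbrs V sg (-1) 1 u v)"
proof -
  have "int (card (common_nbrs V sg u v)) = (\<Sum>w\<in>V. of_bool (adj sg u w \<and> adj sg v w))"
    using finite_vertices by (simp add: common_nbrs_def Int_def)
  also have "\<dots> = (\<Sum>w\<in>V. \<bar>sg u w\<bar> * \<bar>sg v w\<bar>)"
  proof (intro sum.cong refl)
    fix w assume "w \<in> V"
    then show "of_bool (adj sg u w \<and> adj sg v w) = \<bar>sg u w\<bar> * \<bar>sg v w\<bar>"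
      using sg_cases[OF assms(1)] sg_cases[OF assms(2)] by (force simp: adj_def)
  qed
  finally show ?thesis
    using sum_sign_products[of abs abs u v] assms by simp
qed

lemma card_common_signed_nbrs_le:
  assumes "v \<in> V"
  shows "card (common_signed_nbrs V sg s 1 u v) + card (common_signed_nbrs V sg s (-1) u v)
    \<le> card (signed_nbrs V sg s u - {v})"
proof -
  have "card (common_signed_nbrs V sg s 1 u v) + card (common_signed_nbrs V sg s (-1) u v)
      = card (common_signed_nbrs V sg s 1 u v \<union> common_signed_nbrs V sg s (-1) u v)"
    using finite_vertices by (intro card_Un_disjoint[symmetric]) (auto simp: common_signed_nbrs_def)
  also have "\<dots> \<le> card (signed_nbrs V sg s u - {v})"
    using finite_vertices sg_self[OF assms]
    by (intro card_mono) (auto simp: common_signed_nbrs_def signed_nbrs_def)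
  finally show ?thesis .
qed

lemma complete_if_card_eq_Suc_degree:
  assumes "regular V sg r" "card V = Suc r"
  shows "complete V sg"
  unfolding complete_def
proof (intro ballI impI)
  fix x y assume "x \<in> V" "y \<in> V" "x \<noteq> y"
  have "nbrs V sg x \<subseteq> V - {x}"
    using sg_self[OF \<open>x \<in> V\<close>] by (auto simp: nbrs_def adj_def)
  moreover have "card (nbrs V sg x) = card (V - {x})"
    using assms \<open>x \<in> V\<close> finite_vertices by (simp add: regular_def degree_def nbrs_def)
  ultimately have "nbrs V sg x = V - {x}"
    using finite_vertices by (intro card_subset_eq) auto
  then show "adj sg x y"
    using \<open>y \<in> V\<close> \<open>x \<noteq> y\<close> by (auto simp: nbrs_def)
qed

lemma closed_nbrs_eq_if_card_common_nbrs:
  assumes "regular V sg (Suc r)" "u \<in> V" "v \<in> V" "adj sg u v"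
    and "card (common_nbrs V sg u v) = r"
  shows "insert u (nbrs V sg u) = insert v (nbrs V sg v)"
proof -
  have common_eq: "common_nbrs V sg u v = nbrs V sg x - {y}"
    if "x \<in> V" "y \<in> V" "adj sg x y" "common_nbrs V sg u v \<subseteq> nbrs V sg x - {y}" for x y
  proof (rule card_subset_eq)
    show "finite (nbrs V sg x - {y})"
      using finite_vertices by (simp add: nbrs_def)
    show "card (common_nbrs V sg u v) = card (nbrs V sg x - {y})"
      using assms(1,5) that(1-3) by (simp add: regular_def degree_def nbrs_def)
  qed (fact that(4))
  have vu: "adj sg v u"
    using assms(4) sg_sym[OF assms(2,3)] by (simp add: adj_def)
  have "common_nbrs V sg u v = nbrs V sg u - {v}"
    using sg_self[OF assms(3)] by (intro common_eq assms) (auto simp: common_nbrs_def nbrs_def adj_def)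
  moreover have "common_nbrs V sg u v = nbrs V sg v - {u}"
    using sg_self[OF assms(2)] by (intro common_eq assms vu) (auto simp: common_nbrs_def nbrs_def adj_def)
  moreover have "v \<in> nbrs V sg u" "u \<in> nbrs V sg v"
    using assms(2-4) vu by (auto simp: nbrs_def)
  ultimately show ?thesis by blast
qed

end

context
  fixes V :: "'a set" and sg :: "'a \<Rightarrow> 'a \<Rightarrow> int" and n r :: nat and a b c :: int
  assumes srsg: "SRSG V sg n r a b c"
begin

lemma SRSG_signed_graph: "signed_graph V sg"
  using srsg unfolding SRSG_def by blast

lemma SRSG_A2_pos: "u \<in> V \<Longrightarrow> v \<in> V \<Longrightarrow> sg u v = 1 \<Longrightarrow> A2 V sg u v = a"
  using srsg unfolding SRSG_def by blast

lemma SRSG_A2_neg: "u \<in> V \<Longrightarrow> v \<in> V \<Longrightarrow> sg u v = -1 \<Longrightarrow> A2 V sg u v = b"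
  using srsg unfolding SRSG_def by blast

lemma SRSG_A2_eq:
  assumes "w \<in> V" "v \<in> V"
  shows "2 * A2 V sg w v = 2 * (int r - c) * of_bool (w = v) + (a - b) * sg w v
    + (a + b - 2 * c) * \<bar>sg w v\<bar> + 2 * c"
proof (cases "w = v")
  case True
  then show ?thesis
    using srsg sg_self[OF SRSG_signed_graph assms(2)] assms unfolding SRSG_def by simp
next
  case False
  then show ?thesis
    using sg_cases[OF SRSG_signed_graph assms] SRSG_A2_pos[OF assms] SRSG_A2_neg[OF assms]
      srsg assms unfolding SRSG_def adj_def by auto
qed

lemma even_pos_degree_a_minus_neg_degree_b:
  assumes "u \<in> V"
  shows "even (int (pos_degree V sg u) * a - int (neg_degree V sg u) * b)"
proof -
  note signed = SRSG_signed_graph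
  have "(\<Sum>v\<in>V. sg u v * A2 V sg v u)
      = (\<Sum>v\<in>V. a * of_bool (sg u v = 1) - b * of_bool (sg u v = -1))"
  proof (intro sum.cong refl)
    fix v assume v: "v \<in> V"
    have "sg v u = sg u v" using sg_sym[OF signed assms v] by simp
    then show "sg u v * A2 V sg v u = a * of_bool (sg u v = 1) - b * of_bool (sg u v = -1)"
      using sg_cases[OF signed assms v] SRSG_A2_pos[OF v assms] SRSG_A2_neg[OF v assms] by auto
  qed
  also have "\<dots> = int (pos_degree V sg u) * a - int (neg_degree V sg u) * b"
    using finite_vertices[OF signed]
    by (simp add: sum_subtractf sum_distrib_left[symmetric] pos_degree_def neg_degree_def Int_def)
  finally have "(\<Sum>v\<in>V. \<Sum>w\<in>V. sg u v * sg v w * sg w u)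
      = int (pos_degree V sg u) * a - int (neg_degree V sg u) * b"
    by (simp add: A2_def sum_distrib_left mult.assoc)
  moreover have "even (\<Sum>v\<in>V. \<Sum>w\<in>V. sg u v * sg v w * sg w u)"
    using finite_vertices[OF signed] sg_sym[OF signed] sg_self[OF signed] assms
    by (intro even_sum_symmetric_zero_diag) (simp_all add: mult.commute)
  ultimately show ?thesis by simp
qed

text \<open>The next two lemmas compute the entries of \<open>A A\<^sup>2\<close> and \<open>A\<^sup>2 A\<close> from
  \<open>2 A\<^sup>2 = 2(r - c) I + (a - b) A + (a + b - 2c) |A| + 2c J\<close>, using \<open>A J = J A = \<rho> J\<close>.\<close>

lemma sum_sg_mult_A2:
  assumes "net_regular V sg \<rho>" "u \<in> V" "v \<in> V"
  shows "2 * (\<Sum>w\<in>V. sg u w * A2 V sg w v) = 2 * (int r - c) * sg u v + (a - b) * A2 V sg u v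
    + (a + b - 2 * c) * (\<Sum>w\<in>V. sg u w * \<bar>sg v w\<bar>) + 2 * c * \<rho>"
proof -
  note signed = SRSG_signed_graph
  have "2 * (\<Sum>w\<in>V. sg u w * A2 V sg w v) = (\<Sum>w\<in>V. sg u w * (2 * A2 V sg w v))"
    by (simp add: sum_distrib_left mult.left_commute)
  also have "\<dots> = (\<Sum>w\<in>V. 2 * (int r - c) * (sg u w * of_bool (w = v))
      + (a - b) * (sg u w * sg w v) + (a + b - 2 * c) * (sg u w * \<bar>sg v w\<bar>) + 2 * c * sg u w)"
    using sg_sym[OF signed _ assms(3)]
    by (intro sum.cong refl) (simp add: SRSG_A2_eq assms(3) algebra_simps)
  also have "\<dots> = 2 * (int r - c) * sg u v + (a - b) * A2 V sg u v
      + (a + b - 2 * c) * (\<Sum>w\<in>V. sg u w * \<bar>sg v w\<bar>) + 2 * c * (\<Sum>w\<in>V. sg u w)"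
    using finite_vertices[OF signed] assms(3)
    by (simp add: sum.distrib sum_distrib_left[symmetric] A2_def)
  finally show ?thesis
    using sum_sg_eq_net_degree[OF signed assms(2)] assms(1,2) by (simp add: net_regular_def)
qed

lemma sum_A2_mult_sg:
  assumes "net_regular V sg \<rho>" "u \<in> V" "v \<in> V"
  shows "2 * (\<Sum>w\<in>V. A2 V sg u w * sg w v) = 2 * (int r - c) * sg u v + (a - b) * A2 V sg u v
    + (a + b - 2 * c) * (\<Sum>w\<in>V. \<bar>sg u w\<bar> * sg v w) + 2 * c * \<rho>"
proof -
  note signed = SRSG_signed_graph
  have "2 * (\<Sum>w\<in>V. A2 V sg u w * sg w v) = (\<Sum>w\<in>V. (2 * A2 V sg u w) * sg w v)"
    by (simp add: sum_distrib_left mult.assoc)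
  also have "\<dots> = (\<Sum>w\<in>V. 2 * (int r - c) * (of_bool (u = w) * sg w v)
      + (a - b) * (sg u w * sg w v) + (a + b - 2 * c) * (\<bar>sg u w\<bar> * sg v w) + 2 * c * sg v w)"
    using sg_sym[OF signed _ assms(3)]
    by (intro sum.cong refl) (simp add: SRSG_A2_eq assms(2) algebra_simps)
  also have "\<dots> = 2 * (int r - c) * sg u v + (a - b) * A2 V sg u v
      + (a + b - 2 * c) * (\<Sum>w\<in>V. \<bar>sg u w\<bar> * sg v w) + 2 * c * (\<Sum>w\<in>V. sg v w)"
    using finite_vertices[OF signed] assms(2)
    by (simp add: sum.distrib sum_distrib_left[symmetric] A2_def)
  finally show ?thesis
    using sum_sg_eq_net_degree[OF signed assms(3)] assms(1,3) by (simp add: net_regular_def)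
qed

lemma card_common_signed_nbrs_pos_neg_eq:
  assumes "net_regular V sg \<rho>" "a + b \<noteq> 2 * c" "u \<in> V" "v \<in> V"
  shows "card (common_signed_nbrs V sg 1 (-1) u v) = card (common_signed_nbrs V sg (-1) 1 u v)"
proof -
  have "2 * (\<Sum>w\<in>V. sg u w * A2 V sg w v) = 2 * (\<Sum>w\<in>V. A2 V sg u w * sg w v)"
    by (simp only: sum_sg_mult_A2_assoc)
  then have "(a + b - 2 * c) * (\<Sum>w\<in>V. sg u w * \<bar>sg v w\<bar>)
      = (a + b - 2 * c) * (\<Sum>w\<in>V. \<bar>sg u w\<bar> * sg v w)"
    unfolding sum_sg_mult_A2[OF assms(1,3,4)] sum_A2_mult_sg[OF assms(1,3,4)] by linarith
  then have "(\<Sum>w\<in>V. sg u w * \<bar>sg v w\<bar>) = (\<Sum>w\<in>V. \<bar>sg u w\<bar> * sg v w)"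
    using assms(2) by simp
  then show ?thesis
    using sum_sign_products[OF SRSG_signed_graph, of id abs u v]
      sum_sign_products[OF SRSG_signed_graph, of abs id u v] assms(3,4) by simp
qed

end

locale signed_graph_3_2 =
  fixes V :: "'a set" and sg :: "'a \<Rightarrow> 'a \<Rightarrow> int"
  assumes signed: "signed_graph V sg"
    and connected: "connected_sg V sg"
    and not_complete: "\<not> complete V sg"
    and card_pos_nbrs: "u \<in> V \<Longrightarrow> card (signed_nbrs V sg 1 u) = 3"
    and card_neg_nbrs: "u \<in> V \<Longrightarrow> card (signed_nbrs V sg (-1) u) = 2"
begin

abbreviation "N \<equiv> nbrs V sg"
abbreviation "Pos \<equiv> signed_nbrs V sg 1"
abbreviation "Neg \<equiv> signed_nbrs V sg (-1)"
abbreviation "Com \<equiv> common_nbrs V sg"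
abbreviation "Com_sg \<equiv> common_signed_nbrs V sg"

declare finite_common_nbrs[OF signed, simp] finite_common_signed_nbrs[OF signed, simp]

lemma ex_signed_edge:
  assumes "s = 1 \<or> s = -1"
  obtains u v where "u \<in> V" "v \<in> V" "sg u v = s"
proof -
  obtain u where "u \<in> V"
    using connected unfolding connected_sg_def by blast
  moreover have "signed_nbrs V sg s u \<noteq> {}"
    using assms card_pos_nbrs[OF \<open>u \<in> V\<close>] card_neg_nbrs[OF \<open>u \<in> V\<close>] by auto
  ultimately show ?thesis
    using that by (auto simp: signed_nbrs_def)
qed

lemma regular_5: "regular V sg 5"
  using degree_eq_pos_degree_plus_neg_degree[OF signed] card_pos_nbrs card_neg_nbrs
  by (simp add: regular_def pos_degree_def neg_degree_def signed_nbrs_def)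

lemma closed_nbrs_not_closed:
  assumes "u \<in> V" "\<And>x. x \<in> insert u (N u) \<Longrightarrow> N x \<subseteq> insert u (N u)"
  shows False
proof -
  have "V = insert u (N u)"
    using V_eq_closed_nbrs_if_closed[OF connected assms] .
  moreover have "u \<notin> N u"
    using sg_self[OF signed assms(1)] by (simp add: nbrs_def adj_def)
  moreover have "card (N u) = 5"
    using regular_5 assms(1) by (simp add: regular_def degree_def nbrs_def)
  ultimately have "card V = Suc 5"
    using finite_vertices[OF signed] by (metis card_insert_disjoint finite_insert infinite_super subset_insertI)
  then show False
    using complete_if_card_eq_Suc_degree[OF signed regular_5] not_complete by simp
qed

lemma closed_nbrs_eq_at_pos_nbr:
  assumes twins: "\<And>x y. x \<in> V \<Longrightarrow> y \<in> V \<Longrightarrow> sg x y = 1 \<Longrightarrow> Com x y \<noteq> {}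
      \<Longrightarrow> insert x (N x) = insert y (N y)"
    and "u \<in> V" "v \<in> V" "sg u v = 1" "insert u (N u) = insert v (N v)"
    and p: "p \<in> Pos u"
  shows "insert p (N p) = insert u (N u)"
proof (cases "p = v")
  case False
  have pV: "p \<in> V" and "sg u p = 1"
    using p by (auto simp: signed_nbrs_def)
  moreover have "p \<in> insert v (N v)"
    unfolding assms(5)[symmetric] using p by (simp add: nbrs_def signed_nbrs_def adj_def)
  then have "v \<in> Com u p"
    using False assms(3,4) sg_sym[OF signed \<open>v \<in> V\<close> pV]
    by (simp add: common_nbrs_def nbrs_def adj_def)
  then have "Com u p \<noteq> {}"
    by blast
  ultimately show ?thesis
    using twins[OF \<open>u \<in> V\<close>] by simp
next
  case True
  then show ?thesis by (simp only: assms(5))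
qed

lemma closed_nbrs_eq_at_neg_nbr:
  assumes twins: "\<And>x y. x \<in> V \<Longrightarrow> y \<in> V \<Longrightarrow> sg x y = 1 \<Longrightarrow> Com x y \<noteq> {}
      \<Longrightarrow> insert x (N x) = insert y (N y)"
    and "u \<in> V" and pos: "\<And>p. p \<in> Pos u \<Longrightarrow> insert p (N p) = insert u (N u)"
    and m: "m \<in> Neg u"
  shows "insert m (N m) = insert u (N u)"
proof -
  have mV: "m \<in> V" and um: "sg u m = -1"
    using m by (auto simp: signed_nbrs_def)
  have adj: "sg m p \<noteq> 0" if "p \<in> Pos u" for p
  proof -
    have pV: "p \<in> V" and "m \<noteq> p"
      using that um by (auto simp: signed_nbrs_def)
    moreover have "m \<in> insert p (N p)"
      unfolding pos[OF that] using mV um by (simp add: nbrs_def adj_def)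
    ultimately show ?thesis
      using sg_sym[OF signed mV pV] by (simp add: nbrs_def adj_def)
  qed
  have "\<not> Pos u \<subseteq> Neg m"
    using card_mono[of "Neg m" "Pos u"] finite_vertices[OF signed]
      card_pos_nbrs[OF \<open>u \<in> V\<close>] card_neg_nbrs[OF mV] by (auto simp: signed_nbrs_def)
  then obtain p where p: "p \<in> Pos u" "sg m p = 1"
    using adj sg_cases[OF signed mV] by (force simp: signed_nbrs_def)
  have pV: "p \<in> V" and up: "sg u p = 1"
    using p(1) by (auto simp: signed_nbrs_def)
  have "u \<in> Com m p"
    using um up p(2) sg_sym[OF signed \<open>u \<in> V\<close> mV] sg_sym[OF signed \<open>u \<in> V\<close> pV] \<open>u \<in> V\<close>
    by (simp add: common_nbrs_def adj_def)
  then have "Com m p \<noteq> {}"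
    by blast
  then show ?thesis
    using twins[OF mV pV p(2)] pos[OF p(1)] by simp
qed

lemma pos_edge_no_common_nbrs:
  assumes twins: "\<And>x y. x \<in> V \<Longrightarrow> y \<in> V \<Longrightarrow> sg x y = 1 \<Longrightarrow> Com x y \<noteq> {}
      \<Longrightarrow> card (Com x y) = 4"
    and "u \<in> V" "v \<in> V" "sg u v = 1"
  shows "Com u v = {}"
proof (rule ccontr)
  have closed_twins: "insert x (N x) = insert y (N y)"
    if "x \<in> V" "y \<in> V" "sg x y = 1" "Com x y \<noteq> {}" for x y
    using that twins[OF that] regular_5
    by (intro closed_nbrs_eq_if_card_common_nbrs[OF signed, where r = 4]) (auto simp: adj_def)
  assume "Com u v \<noteq> {}"
  then have twin_uv: "insert u (N u) = insert v (N v)"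
    by (rule closed_twins[OF assms(2-4)])
  have pos: "insert p (N p) = insert u (N u)" if "p \<in> Pos u" for p
    using closed_nbrs_eq_at_pos_nbr[OF closed_twins assms(2-4) twin_uv that] .
  have "insert x (N x) = insert u (N u)" if "x \<in> N u" for x
  proof -
    have "x \<in> Pos u \<or> x \<in> Neg u"
      using that nbrs_eq_signed_nbrs_Un[OF signed \<open>u \<in> V\<close>] by blast
    then show ?thesis
      using pos closed_nbrs_eq_at_neg_nbr[OF closed_twins \<open>u \<in> V\<close> pos] by blast
  qed
  then show False
    using closed_nbrs_not_closed[OF \<open>u \<in> V\<close>] by blast
qed

end

locale srsg_5_1 = signed_graph_3_2 V sg for V :: "'a set" and sg +
  fixes n :: nat and a b c :: int
  assumes srsg: "SRSG V sg n 5 a b c"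
    and nondegenerate: "a + b \<noteq> 2 * c"
begin

lemma net_regular_1: "net_regular V sg 1"
  using card_pos_nbrs card_neg_nbrs
  by (simp add: net_regular_def net_degree_def pos_degree_def neg_degree_def signed_nbrs_def)

lemma card_neg_pos_eq_card_pos_neg:
  "u \<in> V \<Longrightarrow> v \<in> V \<Longrightarrow> card (Com_sg (-1) 1 u v) = card (Com_sg 1 (-1) u v)"
  using card_common_signed_nbrs_pos_neg_eq[OF srsg net_regular_1 nondegenerate] by simp

lemma edge_counts:
  assumes "u \<in> V" "v \<in> V"
  shows "A2 V sg u v = int (card (Com_sg 1 1 u v)) + int (card (Com_sg (-1) (-1) u v))
      - 2 * int (card (Com_sg 1 (-1) u v))"
    and "card (Com u v) = card (Com_sg 1 1 u v) + card (Com_sg (-1) (-1) u v)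
      + 2 * card (Com_sg 1 (-1) u v)"
    and "card (Com_sg 1 1 u v) + card (Com_sg 1 (-1) u v) \<le> card (Pos u - {v})"
    and "card (Com_sg (-1) (-1) u v) + card (Com_sg 1 (-1) u v) \<le> card (Neg u - {v})"
  using A2_eq_card_common_signed_nbrs[OF signed assms] card_common_nbrs_eq[OF signed assms]
    card_common_signed_nbrs_le[OF signed assms(2), of 1 u]
    card_common_signed_nbrs_le[OF signed assms(2), of "-1" u]
    card_neg_pos_eq_card_pos_neg[OF assms]
  by simp_all

lemma card_signed_nbrs_Diff_singleton:
  assumes "u \<in> V" "v \<in> V"
  shows "card (Pos u - {v}) = (if sg u v = 1 then 2 else 3)"
    and "card (Neg u - {v}) = (if sg u v = -1 then 1 else 2)"
  using card_pos_nbrs[OF assms(1)] card_neg_nbrs[OF assms(1)] assms(2)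
  by (auto simp: card_Diff_singleton_if signed_nbrs_def)

lemma pos_edge_counts:
  assumes "u \<in> V" "v \<in> V" "sg u v = 1"
  shows "a = int (card (Com_sg 1 1 u v)) + int (card (Com_sg (-1) (-1) u v))
      - 2 * int (card (Com_sg 1 (-1) u v))"
    and "card (Com u v) = card (Com_sg 1 1 u v) + card (Com_sg (-1) (-1) u v)
      + 2 * card (Com_sg 1 (-1) u v)"
    and "card (Com_sg 1 1 u v) + card (Com_sg 1 (-1) u v) \<le> 2"
    and "card (Com_sg (-1) (-1) u v) + card (Com_sg 1 (-1) u v) \<le> 2"
  using edge_counts[OF assms(1,2)] card_signed_nbrs_Diff_singleton[OF assms(1,2)]
    SRSG_A2_pos[OF srsg assms] assms(3) by simp_all

lemma neg_edge_counts:
  assumes "u \<in> V" "v \<in> V" "sg u v = -1"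
  shows "b = int (card (Com_sg 1 1 u v)) + int (card (Com_sg (-1) (-1) u v))
      - 2 * int (card (Com_sg 1 (-1) u v))"
    and "card (Com u v) = card (Com_sg 1 1 u v) + card (Com_sg (-1) (-1) u v)
      + 2 * card (Com_sg 1 (-1) u v)"
    and "card (Com_sg 1 1 u v) + card (Com_sg 1 (-1) u v) \<le> 3"
    and "card (Com_sg (-1) (-1) u v) + card (Com_sg 1 (-1) u v) \<le> 1"
  using edge_counts[OF assms(1,2)] card_signed_nbrs_Diff_singleton[OF assms(1,2)]
    SRSG_A2_neg[OF srsg assms] assms(3) by simp_all

lemma pos_edge_no_common_nbrs_if_a_minus_4_0_4:
  assumes "a = -4 \<or> a = 0 \<or> a = 4" "u \<in> V" "v \<in> V" "sg u v = 1"
  shows "Com u v = {}"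
proof (rule pos_edge_no_common_nbrs[OF _ assms(2-4)])
  fix x y assume xy: "x \<in> V" "y \<in> V" "sg x y = 1" and "Com x y \<noteq> {}"
  then have "card (Com x y) \<noteq> 0"
    by simp
  then show "card (Com x y) = 4"
    using pos_edge_counts[OF xy] assms(1)
    by (cases "card (Com_sg 1 (-1) x y) = 0"; elim disjE; linarith)
qed

lemma a_cases: "a = -2 \<or> a = 0 \<or> a = 2"
proof -
  obtain u v where uv: "u \<in> V" "v \<in> V" "sg u v = 1"
    using ex_signed_edge by blast
  note counts = pos_edge_counts[OF uv]
  have "a \<noteq> 4 \<and> a \<noteq> -4"
    using pos_edge_no_common_nbrs_if_a_minus_4_0_4[OF _ uv] counts by fastforce
  moreover have "even (3 * a - 2 * b)"
    using even_pos_degree_a_minus_neg_degree_b[OF srsg uv(1)] card_pos_nbrs[OF uv(1)]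
      card_neg_nbrs[OF uv(1)] by (simp add: pos_degree_def neg_degree_def signed_nbrs_def)
  moreover have "-4 \<le> a" "a \<le> 4"
    using counts by linarith+
  ultimately show ?thesis
    by presburger
qed

lemma pos_edge_if_a_2:
  assumes "a = 2" "u \<in> V" "v \<in> V" "sg u v = 1"
  shows "Com_sg (-1) 1 u v = {}"
proof -
  have "card (Com_sg 1 (-1) u v) = 0"
    using pos_edge_counts[OF assms(2-4)] assms(1) by linarith
  then show ?thesis
    using card_neg_pos_eq_card_pos_neg[OF assms(2,3)] by simp
qed

lemma pos_edge_if_a_minus_2:
  assumes "a = -2" "u \<in> V" "v \<in> V" "sg u v = 1"
  shows "Com_sg (-1) (-1) u v = {}" and "card (Com_sg (-1) 1 u v) = 1"
proof -
  have "card (Com_sg (-1) (-1) u v) = 0 \<and> card (Com_sg 1 (-1) u v) = 1"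
    using pos_edge_counts[OF assms(2-4)] assms(1) by linarith
  then show "Com_sg (-1) (-1) u v = {}" and "card (Com_sg (-1) 1 u v) = 1"
    using card_neg_pos_eq_card_pos_neg[OF assms(2,3)] by simp_all
qed

lemma neg_edge_no_pos_pos_if_a_ne_minus_2:
  assumes "a \<noteq> -2" "u \<in> V" "v \<in> V" "sg u v = -1"
  shows "Com_sg 1 1 u v = {}"
proof (rule ccontr)
  assume "Com_sg 1 1 u v \<noteq> {}"
  then obtain w where w: "w \<in> V" "sg u w = 1" "sg v w = 1"
    by (auto simp: common_signed_nbrs_def)
  have "v \<in> Com u w" and "v \<in> Com_sg (-1) 1 u w"
    using assms(3,4) w(3) sg_sym[OF signed w(1) assms(3)]
    by (simp_all add: common_nbrs_def common_signed_nbrs_def adj_def)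
  then show False
    using a_cases assms(1) pos_edge_no_common_nbrs_if_a_minus_4_0_4[OF _ assms(2) w(1,2)]
      pos_edge_if_a_2[OF _ assms(2) w(1,2)] by auto
qed

lemma a_eq_2_if_neg_edge_pos_neg:
  assumes "u \<in> V" "v \<in> V" "sg u v = -1" "Com_sg 1 (-1) u v \<noteq> {}"
  shows "a = 2"
proof -
  obtain w where w: "w \<in> V" "sg u w = 1" "sg v w = -1"
    using assms(4) by (auto simp: common_signed_nbrs_def)
  have "v \<in> Com u w" and "v \<in> Com_sg (-1) (-1) u w"
    using assms(2,3) w(3) sg_sym[OF signed w(1) assms(2)]
    by (simp_all add: common_nbrs_def common_signed_nbrs_def adj_def)
  then show ?thesis
    using a_cases pos_edge_no_common_nbrs_if_a_minus_4_0_4[OF _ assms(1) w(1,2)]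
      pos_edge_if_a_minus_2(1)[OF _ assms(1) w(1,2)] by auto
qed

lemma b_ge_minus_2: "-2 \<le> b"
proof -
  obtain u v where "u \<in> V" "v \<in> V" "sg u v = -1"
    using ex_signed_edge by blast
  then show ?thesis
    using neg_edge_counts by fastforce
qed

lemma sum_card_pos_pos_neg_nbrs_if_a_minus_2:
  assumes "a = -2" "u \<in> V"
  shows "(\<Sum>m\<in>Neg u. card (Com_sg 1 1 u m)) = 3"
proof -
  have "Com_sg 1 1 u m = {p\<in>Pos u. sg p m = 1}" if "m \<in> Neg u" for m
  proof -
    have "m \<in> V"
      using that by (simp add: signed_nbrs_def)
    show ?thesis
      unfolding common_signed_nbrs_def signed_nbrs_def
      by (rule Collect_cong) (use sg_sym[OF signed \<open>m \<in> V\<close>] in auto)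
  qed
  then have "(\<Sum>m\<in>Neg u. card (Com_sg 1 1 u m)) = (\<Sum>m\<in>Neg u. card {p\<in>Pos u. sg p m = 1})"
    by simp
  also have "\<dots> = (\<Sum>p\<in>Pos u. card {m\<in>Neg u. sg p m = 1})"
    unfolding card_eq_sum
    by (rule sum.swap_restrict[of "Pos u" "Neg u" "\<lambda>_ _. 1" "\<lambda>p m. sg p m = 1", symmetric])
      (use finite_vertices[OF signed] in \<open>simp_all add: signed_nbrs_def\<close>)
  also have "\<dots> = (\<Sum>p\<in>Pos u. card (Com_sg (-1) 1 u p))"
    by (intro sum.cong refl arg_cong[where f = card]) (auto simp: common_signed_nbrs_def signed_nbrs_def)
  also have "\<dots> = (\<Sum>p\<in>Pos u. 1)"
    using pos_edge_if_a_minus_2(2)[OF assms(1,2)] by (simp add: signed_nbrs_def)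
  finally show ?thesis
    using card_pos_nbrs[OF assms(2)] by simp
qed

lemma b_lt_3: "b < 3"
proof (rule ccontr)
  assume "\<not> b < 3"
  then have pos_pos: "2 \<le> card (Com_sg 1 1 u m)" if "u \<in> V" "m \<in> V" "sg u m = -1" for u m
    using neg_edge_counts[OF that] by linarith
  obtain u m where um: "u \<in> V" "m \<in> V" "sg u m = -1"
    using ex_signed_edge by blast
  have "a = -2"
    using pos_pos[OF um] neg_edge_no_pos_pos_if_a_ne_minus_2[OF _ um] by fastforce
  have "(\<Sum>m\<in>Neg u. 2) \<le> (\<Sum>m\<in>Neg u. card (Com_sg 1 1 u m))"
    using pos_pos[OF um(1)] by (intro sum_mono) (auto simp: signed_nbrs_def)
  then show False
    using sum_card_pos_pos_neg_nbrs_if_a_minus_2[OF \<open>a = -2\<close> um(1)] card_neg_nbrs[OF um(1)] by simp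
qed

lemma neg_edge_no_common_nbrs_if_b_0:
  assumes "b = 0" "u \<in> V" "v \<in> V" "sg u v = -1"
  shows "Com u v = {}"
proof -
  note counts = neg_edge_counts[OF assms(2-4)]
  have "card (Com_sg 1 (-1) u v) = 0"
  proof (rule ccontr)
    assume pos_neg: "card (Com_sg 1 (-1) u v) \<noteq> 0"
    then have "a = 2"
      using a_eq_2_if_neg_edge_pos_neg[OF assms(2-4)] by fastforce
    then have "card (Com_sg 1 1 u v) = 0"
      using neg_edge_no_pos_pos_if_a_ne_minus_2[OF _ assms(2-4)] by simp
    then show False
      using pos_neg counts assms(1) by linarith
  qed
  then have "card (Com u v) = 0"
    using counts assms(1) by linarith
  then show ?thesis
    by simp
qed

lemma b_le_0_if_balanced_triangle:
  assumes "u \<in> V" "v \<in> V" "w \<in> V" "sg u v = -1" "sg v w = -1" "sg w u = 1"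
  shows "b \<le> 0"
proof -
  have "w \<in> Com_sg 1 (-1) u v"
    using assms sg_sym[OF signed assms(1,3)] by (simp add: common_signed_nbrs_def)
  then have "card (Com_sg 1 (-1) u v) \<noteq> 0"
    by auto
  then show ?thesis
    using neg_edge_counts[OF assms(1,2,4)] by linarith
qed

lemma a_eq_minus_2_if_b:
  assumes "b = 2 \<or> b = -1"
  shows "a = -2"
proof -
  obtain u v where uv: "u \<in> V" "v \<in> V" "sg u v = -1"
    using ex_signed_edge by blast
  have "card (Com_sg 1 1 u v) \<noteq> 0"
    using neg_edge_counts[OF uv] assms
    by (cases "card (Com_sg 1 (-1) u v) = 0"; elim disjE; linarith)
  then show ?thesis
    using neg_edge_no_pos_pos_if_a_ne_minus_2[OF _ uv] by fastforce
qed

lemma a_eq_2_if_b_minus_2: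
  assumes "b = -2"
  shows "a = 2"
proof -
  obtain u v where uv: "u \<in> V" "v \<in> V" "sg u v = -1"
    using ex_signed_edge by blast
  have "card (Com_sg 1 (-1) u v) \<noteq> 0"
    using neg_edge_counts[OF uv] assms by linarith
  then show ?thesis
    using a_eq_2_if_neg_edge_pos_neg[OF uv] by fastforce
qed

end

lemma classes_C1_C4_C5_nondegenerate:
  assumes "class_C1 V sg a b c \<or> class_C4 V sg a b c \<or> class_C5 V sg a b c" "\<not> complete V sg"
  shows "a + b \<noteq> 2 * c"
proof
  assume "a + b = 2 * c"
  then have "real_of_int c = real_of_int (a + b) / 2"
    by simp
  then show False
    using assms \<open>a + b = 2 * c\<close> unfolding class_C1_def class_C4_def class_C5_def by auto
qed

theorem proposition3p4:
  fixes V :: "'a set" and sg :: "'a \<Rightarrow> 'a \<Rightarrow> int" and n :: nat and a b c :: int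
  assumes srsg: "SRSG V sg n 5 a b c"
    and cls: "class_C1 V sg a b c \<or> class_C4 V sg a b c \<or> class_C5 V sg a b c"
    and conn: "connected_sg V sg"
    and noncomp: "\<not> complete V sg"
    and reg: "regular V sg 5"
    and netreg: "net_regular V sg 1"
  shows "a < 3
    \<and> (a = 0 \<longrightarrow> (\<forall>u\<in>V. \<forall>v\<in>V. sg u v = 1 \<longrightarrow>
                     \<not> (\<exists>w\<in>V. adj sg u w \<and> adj sg v w)))
    \<and> (b = 0 \<longrightarrow> (\<forall>u\<in>V. \<forall>v\<in>V. sg u v = -1 \<longrightarrow>
                     \<not> (\<exists>w\<in>V. adj sg u w \<and> adj sg v w)))
    \<and> (a = -1 \<longrightarrow> b \<le> 0)
    \<and> (a = -2 \<longrightarrow> b \<ge> -1)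
    \<and> a > -3
    \<and> (-2 \<le> b \<and> b < 3)
    \<and> ((\<exists>u\<in>V. \<exists>v\<in>V. \<exists>w\<in>V. u \<noteq> v \<and> v \<noteq> w \<and> u \<noteq> w \<and>
          sg u v = -1 \<and> sg v w = -1 \<and> sg u v * sg v w * sg w u = 1) \<longrightarrow> b \<le> 0)
    \<and> ((b = 2 \<or> b = -1) \<longrightarrow> a \<le> 0)
    \<and> (b = -2 \<longrightarrow> a \<ge> 1)"
proof -
  note signed = SRSG_signed_graph[OF srsg]
  note degrees = pos_neg_degree_if_regular_net_regular[OF signed reg netreg]
  interpret srsg_5_1 V sg n a b c
    using signed conn noncomp srsg classes_C1_C4_C5_nondegenerate[OF cls noncomp] degrees
    by unfold_locales (force simp: pos_degree_def neg_degree_def signed_nbrs_def)+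
  have no_common: "Com u v = {} \<longleftrightarrow> \<not> (\<exists>w\<in>V. adj sg u w \<and> adj sg v w)" for u v
    by (auto simp: common_nbrs_def)
  have triangle: "b \<le> 0" if "u \<in> V" "v \<in> V" "w \<in> V" "sg u v = -1" "sg v w = -1"
    "sg u v * sg v w * sg w u = 1" for u v w
    using b_le_0_if_balanced_triangle[OF that(1-5)] that(4-6) by simp
  show ?thesis
    using a_cases b_ge_minus_2 b_lt_3 a_eq_minus_2_if_b a_eq_2_if_b_minus_2 triangle
      pos_edge_no_common_nbrs_if_a_minus_4_0_4 neg_edge_no_common_nbrs_if_b_0 no_common
    by (smt (verit))
qed

end
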